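(* Let $A$ be a monoid and let $0\to M\xrightarrow{i}N\xrightarrow{j}P\to0$ be an admissible short exact sequence of $A$-sets with $P$ projective. Then the sequence splits; more precisely, it is isomorphic to the canonical short exact sequence $0\to M\to M\vee P\to P\to0$.
   Context: A monoid is a commutative multiplicative semigroup with $1$ and absorbing $0$. An $A$-set is a pointed set $(M,\ast)$ with an action satisfying $(ab).m=a.(b.m)$, $a.\ast=\ast$, $0.m=\ast$, $1.m=m$; morphisms are equivariant maps; $0$ denotes the one-point $A$-set. The kernel of $f:M\to N$ is $f^{-1}(\ast)$ and its image is $f(M)$; a sequence $M_1\to M_2\to M_3$ is exact at $M_2$ if the kernel of the second map equals the image of the first, and a short exact sequence $0\to M_1\to M_2\to M_3\to0$ is exact at each of $M_1,M_2,M_3$. A morphism is normal if each fibre over a non-base point has at most one element; a short exact sequence is admissible if all its morphisms are normal. $M\vee P$ is the wedge sum (disjoint union with base points identified), and the canonical sequence uses the inclusion of $M$ and the map collapsing $M$ to the base point. A projective $A$-set is a projective object of the category of $A$-sets. *)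

theory Defs
  imports Main
begin

text \<open>We take the whole type 'a as the monoid A, using the
  classes comm_monoid_mult (commutative, associative, unit 1) and mult_zero
  (0 * x = 0 = x * 0).\<close>

record ('a, 'm) aset =
  carrier :: "'m set"
  base :: 'm
  act :: "'a \<Rightarrow> 'm \<Rightarrow> 'm"

definition is_Aset :: "('a::{comm_monoid_mult,mult_zero}, 'm) aset \<Rightarrow> bool" where
  "is_Aset M \<longleftrightarrow>
     base M \<in> carrier M \<and>
     (\<forall>a. \<forall>m\<in>carrier M. act M a m \<in> carrier M) \<and>
     (\<forall>a b. \<forall>m\<in>carrier M. act M (a * b) m = act M a (act M b m)) \<and>
     (\<forall>a. act M a (base M) = base M) \<and>
     (\<forall>m\<in>carrier M. act M 0 m = base M) \<and>
     (\<forall>m\<in>carrier M. act M 1 m = m)"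

definition Ahom :: "('a::{comm_monoid_mult,mult_zero}, 'm) aset \<Rightarrow> ('a, 'n) aset \<Rightarrow> ('m \<Rightarrow> 'n) \<Rightarrow> bool" where
  "Ahom M N f \<longleftrightarrow>
     (\<forall>m\<in>carrier M. f m \<in> carrier N) \<and>
     f (base M) = base N \<and>
     (\<forall>a. \<forall>m\<in>carrier M. f (act M a m) = act N a (f m))"

definition Aiso :: "('a::{comm_monoid_mult,mult_zero}, 'm) aset \<Rightarrow> ('a, 'n) aset \<Rightarrow> ('m \<Rightarrow> 'n) \<Rightarrow> bool" where
  "Aiso M N f \<longleftrightarrow> Ahom M N f \<and> bij_betw f (carrier M) (carrier N)"

definition Akernel :: "('a, 'm) aset \<Rightarrow> ('a, 'n) aset \<Rightarrow> ('m \<Rightarrow> 'n) \<Rightarrow> 'm set" where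
  "Akernel M N f = {m \<in> carrier M. f m = base N}"

definition Aimage :: "('a, 'm) aset \<Rightarrow> ('m \<Rightarrow> 'n) \<Rightarrow> 'n set" where
  "Aimage M f = f ` carrier M"

definition Anormal :: "('a, 'm) aset \<Rightarrow> ('a, 'n) aset \<Rightarrow> ('m \<Rightarrow> 'n) \<Rightarrow> bool" where
  "Anormal M N f \<longleftrightarrow>
     (\<forall>y\<in>carrier N. y \<noteq> base N \<longrightarrow>
        (\<forall>x1\<in>carrier M. \<forall>x2\<in>carrier M. f x1 = y \<longrightarrow> f x2 = y \<longrightarrow> x1 = x2))"

text \<open>Short exact sequence 0 -> M -i-> N -j-> P -> 0: exact at M (kernel of i is
  the image of 0 -> M, i.e. the base point), at N (ker j = im i) and at P
  (ker (P -> 0) = P equals im j).\<close>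
definition short_exact ::
  "('a::{comm_monoid_mult,mult_zero}, 'm) aset \<Rightarrow> ('a, 'n) aset \<Rightarrow> ('a, 'p) aset \<Rightarrow>
   ('m \<Rightarrow> 'n) \<Rightarrow> ('n \<Rightarrow> 'p) \<Rightarrow> bool" where
  "short_exact M N P i j \<longleftrightarrow>
     is_Aset M \<and> is_Aset N \<and> is_Aset P \<and> Ahom M N i \<and> Ahom N P j \<and>
     Akernel M N i = {base M} \<and>
     Akernel N P j = Aimage M i \<and>
     carrier P = Aimage N j"

text \<open>Admissible: all morphisms normal (0 -> M, and P -> 0 are trivially normal).\<close>
definition admissible_short_exact ::
  "('a::{comm_monoid_mult,mult_zero}, 'm) aset \<Rightarrow> ('a, 'n) aset \<Rightarrow> ('a, 'p) aset \<Rightarrow>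
   ('m \<Rightarrow> 'n) \<Rightarrow> ('n \<Rightarrow> 'p) \<Rightarrow> bool" where
  "admissible_short_exact M N P i j \<longleftrightarrow>
     short_exact M N P i j \<and> Anormal M N i \<and> Anormal N P j"

text \<open>Projectivity of P, with respect to A-sets X, Y carried by types 'x and 'y:
  every morphism P -> Y lifts along every epimorphism (= surjective morphism) X -> Y.\<close>
definition Aprojective_wrt ::
  "('a::{comm_monoid_mult,mult_zero}, 'p) aset \<Rightarrow> 'x itself \<Rightarrow> 'y itself \<Rightarrow> bool" where
  "Aprojective_wrt P TX TY \<longleftrightarrow> is_Aset P \<and>
     (\<forall>(X::('a,'x) aset) (Y::('a,'y) aset) g f.
        is_Aset X \<and> is_Aset Y \<and> Ahom X Y g \<and> g ` carrier X = carrier Y \<and> Ahom P Y f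
        \<longrightarrow> (\<exists>h. Ahom P X h \<and> (\<forall>p\<in>carrier P. g (h p) = f p)))"

text \<open>Wedge sum M \<or> P: disjoint union with base points identified, realised on
  'm + 'p with carrier Inl ` M \<union> Inr ` (P - {base P}).\<close>
definition wedge :: "('a::{comm_monoid_mult,mult_zero}, 'm) aset \<Rightarrow> ('a, 'p) aset \<Rightarrow> ('a, 'm + 'p) aset" where
  "wedge M P =
     \<lparr> carrier = Inl ` carrier M \<union> Inr ` (carrier P - {base P}),
       base = Inl (base M),
       act = (\<lambda>a x. case x of
                Inl m \<Rightarrow> Inl (act M a m)
              | Inr p \<Rightarrow> (if act P a p = base P then Inl (base M) else Inr (act P a p))) \<rparr>"

definition wedge_incl :: "('a, 'p) aset \<Rightarrow> 'm \<Rightarrow> 'm + 'p" where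
  "wedge_incl P m = Inl m"

definition wedge_collapse :: "('a, 'p) aset \<Rightarrow> 'm + 'p \<Rightarrow> 'p" where
  "wedge_collapse P x = (case x of Inl _ \<Rightarrow> base P | Inr p \<Rightarrow> p)"

end

theory Submission
  imports Defs
begin

text \<open>Projectivity gives a section s of the epimorphism j.  Since j is normal, s is
  inverse to j away from the base point, so an element n of N outside the image of i is
  s (j n); consequently a.n is the base point as soon as a.(j n) is.  Hence N splits
  equivariantly into the image of i (a copy of M) and the non-base points of P, glued
  at the base point, which is exactly the wedge M \<or> P.\<close>

lemma Ahom_id: "is_Aset X \<Longrightarrow> Ahom X X id"
  by (simp add: is_Aset_def Ahom_def)

lemma Aiso_id: "is_Aset X \<Longrightarrow> Aiso X X id"
  by (simp add: Aiso_def Ahom_id)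

lemma Ahom_closed: "Ahom X Y f \<Longrightarrow> x \<in> carrier X \<Longrightarrow> f x \<in> carrier Y"
  by (simp add: Ahom_def)

lemma Anormal_eqD:
  assumes "Anormal X Y f" "Ahom X Y f" "x \<in> carrier X" "y \<in> carrier X"
    and "f x = f y" "f x \<noteq> base Y"
  shows "x = y"
  using assms Ahom_closed[OF assms(2,3)] unfolding Anormal_def by metis

lemma Aprojective_section:
  fixes N :: "('a::{comm_monoid_mult,mult_zero}, 'n) aset" and j :: "'n \<Rightarrow> 'p"
  assumes "Aprojective_wrt P TYPE('n) TYPE('p)" "is_Aset N"
    and "Ahom N P j" "j ` carrier N = carrier P"
  obtains s where "Ahom P N s" "\<And>p. p \<in> carrier P \<Longrightarrow> j (s p) = p"
proof -
  have "is_Aset P" using assms(1) by (simp add: Aprojective_wrt_def)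
  then have "\<exists>s. Ahom P N s \<and> (\<forall>p\<in>carrier P. j (s p) = id p)"
    using assms unfolding Aprojective_wrt_def by (blast intro: Ahom_id)
  then show thesis using that by auto
qed

lemma normal_section_inverse:
  assumes "Anormal N P j" "Ahom N P j" "Ahom P N s" "\<And>p. p \<in> carrier P \<Longrightarrow> j (s p) = p"
    and "n \<in> carrier N" "j n \<noteq> base P"
  shows "s (j n) = n"
proof -
  have "j n \<in> carrier P" using assms(2,5) by (rule Ahom_closed)
  then show ?thesis
    using Anormal_eqD[OF assms(1,2) Ahom_closed[OF assms(3)] assms(5)] assms(4,6) by simp
qed

lemma normal_section_act_base:
  assumes "Anormal N P j" "Ahom N P j" "Ahom P N s" "\<And>p. p \<in> carrier P \<Longrightarrow> j (s p) = p"
    and "n \<in> carrier N" "j n \<noteq> base P" "act P a (j n) = base P"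
  shows "act N a n = base N"
proof -
  have "act N a n = act N a (s (j n))"
    using normal_section_inverse[OF assms(1-6)] by simp
  also have "\<dots> = s (act P a (j n))"
    using assms(3) Ahom_closed[OF assms(2,5)] by (simp add: Ahom_def)
  also have "\<dots> = base N"
    using assms(3,7) by (simp add: Ahom_def)
  finally show ?thesis .
qed

definition wedge_splitting ::
  "('a, 'm) aset \<Rightarrow> ('a, 'p) aset \<Rightarrow> ('m \<Rightarrow> 'n) \<Rightarrow> ('n \<Rightarrow> 'p) \<Rightarrow> 'n \<Rightarrow> 'm + 'p" where
  "wedge_splitting M P i j n =
     (if j n = base P then Inl (the_inv_into (carrier M) i n) else Inr (j n))"

locale admissible_ses =
  fixes M :: "('a::{comm_monoid_mult,mult_zero}, 'm) aset"
    and N :: "('a, 'n) aset"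
    and P :: "('a, 'p) aset"
    and i :: "'m \<Rightarrow> 'n" and j :: "'n \<Rightarrow> 'p"
  assumes admissible: "admissible_short_exact M N P i j"
begin

lemma Aset_M: "is_Aset M" and Aset_N: "is_Aset N" and Aset_P: "is_Aset P"
  and Ahom_i: "Ahom M N i" and Ahom_j: "Ahom N P j"
  and normal_i: "Anormal M N i" and normal_j: "Anormal N P j"
  and kernel_i: "Akernel M N i = {base M}" and kernel_j: "Akernel N P j = Aimage M i"
  and surj_j: "j ` carrier N = carrier P"
  using admissible unfolding admissible_short_exact_def short_exact_def Aimage_def by auto

lemma inj_on_i: "inj_on i (carrier M)"
proof (rule inj_onI)
  fix x y assume xy: "x \<in> carrier M" "y \<in> carrier M" and "i x = i y"
  show "x = y"
  proof (cases "i x = base N")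
    case True
    then have "x \<in> Akernel M N i" "y \<in> Akernel M N i"
      using xy \<open>i x = i y\<close> by (auto simp: Akernel_def)
    then show ?thesis using kernel_i by simp
  next
    case False
    then show ?thesis using Anormal_eqD[OF normal_i Ahom_i xy] \<open>i x = i y\<close> by simp
  qed
qed

lemma j_eq_base_iff: "n \<in> carrier N \<Longrightarrow> j n = base P \<longleftrightarrow> n \<in> i ` carrier M"
  using kernel_j unfolding Akernel_def Aimage_def by blast

abbreviation "\<beta> \<equiv> wedge_splitting M P i j"

lemma wedge_splitting_incl: "m \<in> carrier M \<Longrightarrow> \<beta> (i m) = Inl m"
  using j_eq_base_iff[OF Ahom_closed[OF Ahom_i]] inj_on_i
  by (simp add: wedge_splitting_def the_inv_into_f_f)

lemma wedge_splitting_collapse: "wedge_collapse P (\<beta> n) = j n"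
  by (simp add: wedge_splitting_def wedge_collapse_def)

lemma wedge_splitting_base: "\<beta> (base N) = Inl (base M)"
  using wedge_splitting_incl[of "base M"] Aset_M Ahom_i by (simp add: is_Aset_def Ahom_def)

lemma wedge_splitting_inj: "inj_on \<beta> (carrier N)"
proof (rule inj_onI)
  fix x y assume xy: "x \<in> carrier N" "y \<in> carrier N" and eq: "\<beta> x = \<beta> y"
  then have "j x = base P \<longleftrightarrow> j y = base P"
    by (auto simp: wedge_splitting_def split: if_splits)
  then consider "j x = base P" "j y = base P" | "j x \<noteq> base P" "j y \<noteq> base P" by blast
  then show "x = y"
  proof cases
    case 1
    then obtain m m' where "m \<in> carrier M" "m' \<in> carrier M" "x = i m" "y = i m'"
      using j_eq_base_iff xy by blast
    then show ?thesis using eq by (simp add: wedge_splitting_incl)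
  next
    case 2
    then have "j x = j y" using eq by (simp add: wedge_splitting_def)
    then show ?thesis using Anormal_eqD[OF normal_j Ahom_j xy] 2 by simp
  qed
qed

lemma wedge_splitting_closed:
  assumes "n \<in> carrier N" shows "\<beta> n \<in> carrier (wedge M P)"
proof (cases "j n = base P")
  case True
  then obtain m where "m \<in> carrier M" "n = i m" using j_eq_base_iff assms by blast
  then show ?thesis by (simp add: wedge_splitting_incl wedge_def)
next
  case False
  then show ?thesis using Ahom_closed[OF Ahom_j assms] by (simp add: wedge_def wedge_splitting_def)
qed

lemma wedge_splitting_image: "\<beta> ` carrier N = carrier (wedge M P)"
proof
  show "\<beta> ` carrier N \<subseteq> carrier (wedge M P)" using wedge_splitting_closed by blast
next
  show "carrier (wedge M P) \<subseteq> \<beta> ` carrier N"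
  proof
    fix w assume "w \<in> carrier (wedge M P)"
    then consider m where "m \<in> carrier M" "w = Inl m"
      | p where "p \<in> carrier P" "p \<noteq> base P" "w = Inr p" by (auto simp: wedge_def)
    then show "w \<in> \<beta> ` carrier N"
    proof cases
      case 1
      then show ?thesis using wedge_splitting_incl Ahom_closed[OF Ahom_i] by (metis image_eqI)
    next
      case 2
      then obtain n where "n \<in> carrier N" "p = j n" using surj_j by auto
      then show ?thesis using 2 by (force simp: wedge_splitting_def)
    qed
  qed
qed

lemma wedge_splitting_bij: "bij_betw \<beta> (carrier N) (carrier (wedge M P))"
  by (simp add: bij_betw_def wedge_splitting_inj wedge_splitting_image)

lemma wedge_splitting_act:
  assumes s: "Ahom P N s" "\<And>p. p \<in> carrier P \<Longrightarrow> j (s p) = p"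
    and n: "n \<in> carrier N"
  shows "\<beta> (act N a n) = act (wedge M P) a (\<beta> n)"
proof (cases "j n = base P")
  case True
  then obtain m where m: "m \<in> carrier M" "n = i m" using j_eq_base_iff n by blast
  have "act M a m \<in> carrier M" using Aset_M m by (simp add: is_Aset_def)
  moreover have "act N a n = i (act M a m)" using Ahom_i m by (simp add: Ahom_def)
  ultimately show ?thesis using m by (simp add: wedge_splitting_incl wedge_def)
next
  case False
  have j_act: "j (act N a n) = act P a (j n)" using Ahom_j n by (simp add: Ahom_def)
  show ?thesis
  proof (cases "act P a (j n) = base P")
    case True
    then have "\<beta> (act N a n) = Inl (base M)"
      using normal_section_act_base[OF normal_j Ahom_j s n False] by (simp add: wedge_splitting_base)
    moreover have "\<beta> n = Inr (j n)" using False by (simp add: wedge_splitting_def)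
    ultimately show ?thesis using True by (simp add: wedge_def)
  next
    case False
    then show ?thesis using \<open>j n \<noteq> base P\<close> j_act by (simp add: wedge_def wedge_splitting_def)
  qed
qed

lemma wedge_splitting_Aiso:
  assumes "Ahom P N s" "\<And>p. p \<in> carrier P \<Longrightarrow> j (s p) = p"
  shows "Aiso N (wedge M P) \<beta>"
  unfolding Aiso_def Ahom_def
  using wedge_splitting_closed wedge_splitting_base wedge_splitting_act[OF assms]
    wedge_splitting_bij by (simp add: wedge_def)

end

theorem proposition2p29:
  fixes M :: "('a::{comm_monoid_mult,mult_zero}, 'm) aset"
    and N :: "('a, 'n) aset"
    and P :: "('a, 'p) aset"
    and i :: "'m \<Rightarrow> 'n" and j :: "'n \<Rightarrow> 'p"
  assumes "admissible_short_exact M N P i j"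
    and "Aprojective_wrt P TYPE('n) TYPE('p)"
  shows "\<exists>\<alpha> \<beta> \<gamma>. Aiso M M \<alpha> \<and> Aiso N (wedge M P) \<beta> \<and> Aiso P P \<gamma> \<and>
           (\<forall>m\<in>carrier M. \<beta> (i m) = wedge_incl P (\<alpha> m)) \<and>
           (\<forall>n\<in>carrier N. wedge_collapse P (\<beta> n) = \<gamma> (j n))"
proof -
  interpret admissible_ses M N P i j by (rule admissible_ses.intro) fact
  obtain s where "Ahom P N s" "\<And>p. p \<in> carrier P \<Longrightarrow> j (s p) = p"
    using Aprojective_section[OF assms(2) Aset_N Ahom_j surj_j] by blast
  then have "Aiso N (wedge M P) (wedge_splitting M P i j)"
    by (rule wedge_splitting_Aiso)
  then show ?thesis
    using Aiso_id[OF Aset_M] Aiso_id[OF Aset_P] wedge_splitting_incl wedge_splitting_collapse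
    by (intro exI[of _ id] exI[of _ "wedge_splitting M P i j"]) (simp add: wedge_incl_def)
qed

end
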